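(* Let $\mathcal K$ be a complex Hilbert space and $\mu$ a $\mathcal K$-Carleson measure. Then for every $x\in\mathbb R\setminus\{0\}$: $\mathcal R_\mu(-x)=\mathcal R_\mu(x)$, $\mathcal I_\mu(-x)=-\mathcal I_\mu(x)$, and $0\le\operatorname{sgn}(x)\mathcal I_\mu(x)$.
   Context: $\mathbb R_+=(0,\infty)$. $H^2(\mathbb C_+,\mathcal K)$ denotes the $\mathcal K$-valued Hardy space on the upper half plane. A $\mathcal K$-Carleson measure is a measure $\mu$ on $\mathbb R_+$ with values in the positive bounded operators on $\mathcal K$ such that $(f,g)\mapsto\int_{\mathbb R_+}\langle f(i\lambda),d\mu(\lambda)g(i\lambda)\rangle$ is a continuous sesquilinear form on $H^2(\mathbb C_+,\mathcal K)$. For $z\in\mathbb C\setminus i(-\infty,0]$, $\mathcal N_\mu(z)=\frac1\pi\int_{\mathbb R_+}\big(\frac1{\lambda-iz}-\frac\lambda{1+\lambda^2}\big)d\mu(\lambda)\in B(\mathcal K)$, $\mathcal R_\mu=\frac12(\mathcal N_\mu+\mathcal N_\mu^* )$, $\mathcal I_\mu=\frac1{2i}(\mathcal N_\mu-\mathcal N_\mu^* )$ (pointwise adjoints). *)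

theory Defs
  imports "HOL-Analysis.Analysis"
begin

class complex_vector = real_vector +
  fixes scaleC :: "complex \<Rightarrow> 'a \<Rightarrow> 'a"
  assumes scaleC_add_right: "scaleC c (x + y) = scaleC c x + scaleC c y"
    and scaleC_add_left: "scaleC (c + d) x = scaleC c x + scaleC d x"
    and scaleC_scaleC: "scaleC c (scaleC d x) = scaleC (c * d) x"
    and scaleC_one: "scaleC 1 x = x"
    and scaleR_scaleC: "scaleR r x = scaleC (complex_of_real r) x"

class chilbert_space = complex_vector + banach +
  fixes cinner :: "'a \<Rightarrow> 'a \<Rightarrow> complex"
  assumes cinner_commute: "cinner x y = cnj (cinner y x)"
    and cinner_add_left: "cinner (x + y) z = cinner x z + cinner y z"
    and cinner_scaleC_left: "cinner (scaleC c x) y = cnj c * cinner x y"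
    and cinner_ge_zero: "0 \<le> Re (cinner x x)"
    and cinner_eq_zero_iff: "cinner x x = 0 \<longleftrightarrow> x = 0"
    and norm_eq_sqrt_cinner: "norm x = sqrt (Re (cinner x x))"

definition bounded_clinear_op :: "('a::chilbert_space \<Rightarrow> 'a) \<Rightarrow> bool" where
  "bounded_clinear_op T \<longleftrightarrow> bounded_linear T \<and> (\<forall>c x. T (scaleC c x) = scaleC c (T x))"

definition op_nonneg :: "('a::chilbert_space \<Rightarrow> 'a) \<Rightarrow> bool" where
  "op_nonneg T \<longleftrightarrow> (\<forall>v. Im (cinner v (T v)) = 0 \<and> 0 \<le> Re (cinner v (T v)))"

definition positive_bounded_op :: "('a::chilbert_space \<Rightarrow> 'a) \<Rightarrow> bool" where
  "positive_bounded_op T \<longleftrightarrow> bounded_clinear_op T \<and> op_nonneg T"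

definition adjoint_op :: "('a::chilbert_space \<Rightarrow> 'a) \<Rightarrow> 'a \<Rightarrow> 'a" where
  "adjoint_op T = (THE S. \<forall>u v. cinner (S u) v = cinner u (T v))"

text \<open>Countably additive in the weak operator topology, defined on the Borel
  subsets of (0,\<infinity>).\<close>
definition pos_op_measure :: "(real set \<Rightarrow> 'a::chilbert_space \<Rightarrow> 'a) \<Rightarrow> bool" where
  "pos_op_measure \<mu> \<longleftrightarrow>
     (\<forall>A. A \<in> sets borel \<and> A \<subseteq> {0<..} \<longrightarrow> positive_bounded_op (\<mu> A)) \<and>
     \<mu> {} = (\<lambda>v. 0) \<and>
     (\<forall>A::nat \<Rightarrow> real set. (\<forall>n. A n \<in> sets borel \<and> A n \<subseteq> {0<..}) \<longrightarrow> disjoint_family A \<longrightarrow>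
        (\<forall>u v. (\<lambda>n. cinner u (\<mu> (A n) v)) sums cinner u (\<mu> (\<Union>n. A n) v)))"

text \<open>Integrals against \<mu> of continuous integrands on (0,\<infinity>):
  Riemann--Stieltjes sums over uniform partitions of [a,b), then the improper
  limit a \<rightarrow> 0+, b \<rightarrow> \<infinity>.  The integrand F t B gives the contribution of a piece
  with tag t and operator mass B, e.g. F t B = k t * cinner u (B v) for
  \<integral> k d\<langle>u,\<mu> v\<rangle>, or F t B = cinner (f t) (B (g t)) for \<integral>\<langle>f, d\<mu> g\<rangle>.\<close>
definition rs_sum :: "(real set \<Rightarrow> 'a \<Rightarrow> 'a) \<Rightarrow> (real \<Rightarrow> ('a \<Rightarrow> 'a) \<Rightarrow> complex)
    \<Rightarrow> real \<Rightarrow> real \<Rightarrow> nat \<Rightarrow> complex" where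
  "rs_sum \<mu> F a b n =
     (\<Sum>j<n. F (a + real j * (b - a) / real n)
               (\<mu> {a + real j * (b - a) / real n ..< a + real (Suc j) * (b - a) / real n}))"

definition rs_on :: "(real set \<Rightarrow> 'a \<Rightarrow> 'a) \<Rightarrow> (real \<Rightarrow> ('a \<Rightarrow> 'a) \<Rightarrow> complex)
    \<Rightarrow> real \<Rightarrow> real \<Rightarrow> complex" where
  "rs_on \<mu> F a b = lim (rs_sum \<mu> F a b)"

definition has_mu_integral :: "(real set \<Rightarrow> 'a \<Rightarrow> 'a) \<Rightarrow> (real \<Rightarrow> ('a \<Rightarrow> 'a) \<Rightarrow> complex)
    \<Rightarrow> complex \<Rightarrow> bool" where
  "has_mu_integral \<mu> F c \<longleftrightarrow>
     (\<forall>a b. 0 < a \<longrightarrow> a < b \<longrightarrow> convergent (rs_sum \<mu> F a b)) \<and>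
     ((\<lambda>(a, b). rs_on \<mu> F a b) \<longlongrightarrow> c) (at_right 0 \<times>\<^sub>F at_top)"

definition H2 :: "(complex \<Rightarrow> 'a::chilbert_space) \<Rightarrow> bool" where
  "H2 f \<longleftrightarrow>
     (\<forall>z. 0 < Im z \<longrightarrow> (\<exists>d. (f has_derivative (\<lambda>h. scaleC h d)) (at z))) \<and>
     (\<exists>C<\<infinity>. \<forall>y>0. (\<integral>\<^sup>+x. ennreal ((norm (f (Complex x y)))\<^sup>2) \<partial>lborel) \<le> C)"

definition H2_norm :: "(complex \<Rightarrow> 'a::chilbert_space) \<Rightarrow> real" where
  "H2_norm f = sqrt (enn2real (SUP y\<in>{0<..}. \<integral>\<^sup>+x. ennreal ((norm (f (Complex x y)))\<^sup>2) \<partial>lborel))"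

definition carleson_measure :: "(real set \<Rightarrow> 'a::chilbert_space \<Rightarrow> 'a) \<Rightarrow> bool" where
  "carleson_measure \<mu> \<longleftrightarrow> pos_op_measure \<mu> \<and>
     (\<forall>f g. H2 f \<longrightarrow> H2 g \<longrightarrow>
        (\<exists>c. has_mu_integral \<mu> (\<lambda>t B. cinner (f (\<i> * complex_of_real t)) (B (g (\<i> * complex_of_real t)))) c)) \<and>
     (\<exists>C. \<forall>f g c. H2 f \<longrightarrow> H2 g \<longrightarrow>
        has_mu_integral \<mu> (\<lambda>t B. cinner (f (\<i> * complex_of_real t)) (B (g (\<i> * complex_of_real t)))) c \<longrightarrow>
        norm c \<le> C * H2_norm f * H2_norm g)"

definition N_kernel :: "complex \<Rightarrow> real \<Rightarrow> complex" where
  "N_kernel z t = 1 / (complex_of_real t - \<i> * z) - complex_of_real (t / (1 + t\<^sup>2))"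

definition N_mu :: "(real set \<Rightarrow> 'a::chilbert_space \<Rightarrow> 'a) \<Rightarrow> complex \<Rightarrow> 'a \<Rightarrow> 'a" where
  "N_mu \<mu> z = (THE T. bounded_clinear_op T \<and>
     (\<forall>u v. has_mu_integral \<mu> (\<lambda>t B. N_kernel z t / complex_of_real pi * cinner u (B v))
                (cinner u (T v))))"

definition R_mu :: "(real set \<Rightarrow> 'a::chilbert_space \<Rightarrow> 'a) \<Rightarrow> complex \<Rightarrow> 'a \<Rightarrow> 'a" where
  "R_mu \<mu> z = (\<lambda>v. scaleC (1/2) (N_mu \<mu> z v + adjoint_op (N_mu \<mu> z) v))"

definition I_mu :: "(real set \<Rightarrow> 'a::chilbert_space \<Rightarrow> 'a) \<Rightarrow> complex \<Rightarrow> 'a \<Rightarrow> 'a" where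
  "I_mu \<mu> z = (\<lambda>v. scaleC (1 / (2 * \<i>)) (N_mu \<mu> z v - adjoint_op (N_mu \<mu> z) v))"

end

theory Submission
  imports Defs
begin

(* For a fixed vector w, the map A |-> <w, mu(A) w> is a finite positive Borel measure on
   (0, oo), and polarization recovers <u, mu(A) v> from four such scalar measures.  The kernel
   k_x(t) = (1/(t - i x) - t/(1 + t^2)) / pi of N_mu(x) is bounded, Lipschitz and O(1/t).
   Hence the Riemann-Stieltjes sums defining the weak integral converge to polarized Lebesgue
   integrals of k_x, and the step operators sum_j k_x(t_j) mu(I_j) converge in norm to a
   bounded operator T_x with <u, T_x v> = int k_x d<u, mu v>; this T_x is N_mu(x).
   Since k_(-x) is the complex conjugate of k_x and the scalar measures do not change when w
   is multiplied by a unimodular scalar, N_mu(-x) is the adjoint of N_mu(x); this gives the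
   symmetry of R_mu and the antisymmetry of I_mu.  Finally
   <v, I_mu(x) v> = Im <v, N_mu(x) v> = int Im k_x d<v, mu v>, and
   sgn(x) Im k_x(t) = |x| / (pi |t - i x|^2) >= 0. *)

lemma cinner_add_right: "cinner x (y + z) = cinner x y + cinner x (z::'a::chilbert_space)"
  by (metis cinner_commute cinner_add_left complex_cnj_add)

lemma cinner_zero_right [simp]: "cinner (y::'a::chilbert_space) 0 = 0"
  using cinner_add_right[of y 0 0] by simp

lemma cinner_diff_left: "cinner (x - z) (y::'a::chilbert_space) = cinner x y - cinner z y"
  using cinner_add_left[of "x - z" z y] by simp

lemma cinner_diff_right: "cinner y (x - z::'a::chilbert_space) = cinner y x - cinner y z"
  using cinner_add_right[of y "x - z" z] by simp

lemma cinner_scaleC_right: "cinner x (scaleC c y) = c * cinner x (y::'a::chilbert_space)"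
  by (metis cinner_commute cinner_scaleC_left complex_cnj_cnj complex_cnj_mult)

lemma cinner_scaleR_left: "cinner (scaleR r x) (y::'a::chilbert_space) = of_real r * cinner x y"
  by (simp add: scaleR_scaleC cinner_scaleC_left)

lemma cinner_scaleR_right: "cinner x (scaleR r y) = of_real r * cinner x (y::'a::chilbert_space)"
  by (simp add: scaleR_scaleC cinner_scaleC_right)

lemma cinner_sum_right: "cinner x (sum f S) = (\<Sum>j\<in>S. cinner x (f j::'a::chilbert_space))"
  by (induction S rule: infinite_finite_induct) (auto simp: cinner_add_right)

lemma scaleC_zero_right [simp]: "scaleC c (0::'a::complex_vector) = 0"
  using scaleC_add_right[of c 0 0] by simp

lemma scaleC_diff_right: "scaleC c (x - y::'a::complex_vector) = scaleC c x - scaleC c y"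
  using scaleC_add_right[of c "x - y" y] by (simp add: eq_diff_eq)

lemma scaleC_minus_left: "scaleC (- c) (x::'a::complex_vector) = - scaleC c x"
  using scaleC_add_left[of c "- c" x] scaleR_scaleC[of 0 x]
  by (simp add: eq_neg_iff_add_eq_0 add.commute)

lemma scaleC_sum_right: "scaleC c (sum f S) = (\<Sum>j\<in>S. scaleC c (f j::'a::complex_vector))"
  by (induction S rule: infinite_finite_induct) (auto simp: scaleC_add_right)

lemma cinner_self: "cinner x (x::'a::chilbert_space) = of_real ((norm x)\<^sup>2)"
proof -
  have "Im (cinner x x) = - Im (cinner x x)"
    using arg_cong[OF cinner_commute[of x x], of Im] by simp
  thus ?thesis using cinner_ge_zero[of x] norm_eq_sqrt_cinner[of x] by (simp add: complex_eq_iff)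
qed

lemma cinner_eqI: "(\<And>u. cinner u x = cinner u y) \<Longrightarrow> x = (y::'a::chilbert_space)"
  by (metis cinner_diff_right cinner_eq_zero_iff right_minus_eq)

lemma cinner_eqI_left: "(\<And>u. cinner x u = cinner y u) \<Longrightarrow> x = (y::'a::chilbert_space)"
  by (rule cinner_eqI) (metis cinner_commute)

lemma norm_scaleC: "norm (scaleC c x) = cmod c * norm (x::'a::chilbert_space)"
proof -
  have "complex_of_real ((norm (scaleC c x))\<^sup>2) = cinner (scaleC c x) (scaleC c x)"
    by (rule cinner_self[symmetric])
  also have "\<dots> = cnj c * c * cinner x x"
    by (simp add: cinner_scaleC_left cinner_scaleC_right)
  also have "\<dots> = complex_of_real ((cmod c * norm x)\<^sup>2)"
    using complex_norm_square[of c] by (simp add: cinner_self power_mult_distrib mult.commute)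
  finally have "(norm (scaleC c x))\<^sup>2 = (cmod c * norm x)\<^sup>2"
    by (simp only: of_real_eq_iff)
  thus ?thesis by (simp add: power2_eq_iff_nonneg)
qed

lemma abs_Re_cinner_le: "\<bar>Re (cinner x y)\<bar> \<le> norm x * norm (y::'a::chilbert_space)"
proof (cases "y = 0")
  case True
  thus ?thesis by simp
next
  case False
  hence ny: "norm y > 0" by simp
  define r where "r = Re (cinner x y)"
  define t where "t = r / (norm y)\<^sup>2"
  have ryx: "Re (cinner y x) = r"
    unfolding r_def by (subst cinner_commute) simp
  have "0 \<le> Re (cinner (x - t *\<^sub>R y) (x - t *\<^sub>R y))" by (rule cinner_ge_zero)
  also have "\<dots> = (norm x)\<^sup>2 - 2 * t * r + t\<^sup>2 * (norm y)\<^sup>2"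
    unfolding cinner_diff_left cinner_diff_right cinner_scaleR_left cinner_scaleR_right
    using ryx r_def by (simp add: cinner_self power2_eq_square algebra_simps)
  also have "\<dots> = (norm x)\<^sup>2 - r\<^sup>2 / (norm y)\<^sup>2"
    using ny by (simp add: t_def field_simps power2_eq_square)
  finally have "r\<^sup>2 \<le> (norm x * norm y)\<^sup>2"
    using ny by (simp add: field_simps power_mult_distrib)
  thus ?thesis unfolding r_def by (simp add: power2_le_iff_abs_le)
qed

lemma norm_cinner_le: "cmod (cinner x y) \<le> norm x * norm (y::'a::chilbert_space)"
proof (cases "cinner x y = 0")
  case True
  thus ?thesis by simp
next
  case False
  define \<theta> where "\<theta> = cnj (cinner x y) / cmod (cinner x y)"
  have "cnj (cinner x y) * cinner x y = of_real ((cmod (cinner x y))\<^sup>2)"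
    by (subst complex_norm_square) (simp add: mult.commute)
  hence "cinner x (scaleC \<theta> y) = of_real (cmod (cinner x y))"
    using False by (simp add: cinner_scaleC_right \<theta>_def power2_eq_square)
  hence "cmod (cinner x y) = Re (cinner x (scaleC \<theta> y))" by simp
  also have "\<dots> \<le> norm x * norm (scaleC \<theta> y)"
    using abs_Re_cinner_le[of x "scaleC \<theta> y"] by linarith
  also have "norm (scaleC \<theta> y) = norm y"
    using False by (simp add: norm_scaleC \<theta>_def norm_divide)
  finally show ?thesis .
qed

lemma bounded_linear_cinner_right: "bounded_linear (cinner (u::'a::chilbert_space))"
proof (rule bounded_linear_intro[where K = "norm u"])
  show "cinner u (r *\<^sub>R x) = r *\<^sub>R cinner u x" for r x
    by (simp add: cinner_scaleR_right scaleR_conv_of_real)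
  show "norm (cinner u x) \<le> norm x * norm u" for x
    using norm_cinner_le[of u x] by (simp add: mult.commute)
qed (rule cinner_add_right)

lemma bounded_linear_scaleC: "bounded_linear (scaleC a :: 'a::chilbert_space \<Rightarrow> 'a)"
proof (rule bounded_linear_intro[where K = "cmod a"])
  show "scaleC a (r *\<^sub>R x) = r *\<^sub>R scaleC a x" for r and x :: 'a
    by (simp add: scaleR_scaleC scaleC_scaleC mult.commute)
  show "norm (scaleC a x) \<le> norm x * cmod a" for x :: 'a
    by (simp add: norm_scaleC mult.commute)
qed (rule scaleC_add_right)

section \<open>Linear operators and polarization\<close>

definition clinear_op :: "('a::complex_vector \<Rightarrow> 'a) \<Rightarrow> bool" where
  "clinear_op A \<longleftrightarrow> (\<forall>x y. A (x + y) = A x + A y) \<and> (\<forall>c x. A (scaleC c x) = scaleC c (A x))"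

lemma clinear_opI:
  "(\<And>x y. A (x + y) = A x + A y) \<Longrightarrow> (\<And>c x. A (scaleC c x) = scaleC c (A x)) \<Longrightarrow> clinear_op A"
  unfolding clinear_op_def by blast

lemma clinear_op_add: "clinear_op A \<Longrightarrow> A (x + y) = A x + A y"
  and clinear_op_scaleC: "clinear_op A \<Longrightarrow> A (scaleC c x) = scaleC c (A x)"
  unfolding clinear_op_def by blast+

lemma clinear_op_diff: "clinear_op A \<Longrightarrow> A (x - y) = A x - A y"
  using clinear_op_add[of A "x - y" y] by (simp add: eq_diff_eq)

lemma clinear_op_scaleR: "clinear_op A \<Longrightarrow> A (scaleR r x) = scaleR r (A x)"
  by (simp add: scaleR_scaleC clinear_op_scaleC)

lemma clinear_op_compose_sub:
  assumes "clinear_op A" "clinear_op B"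
  shows "clinear_op (\<lambda>v. A v - B v)"
proof (rule clinear_opI)
  show "A (x + y) - B (x + y) = (A x - B x) + (A y - B y)" for x y
    using assms by (simp add: clinear_op_add)
  show "A (scaleC z x) - B (scaleC z x) = scaleC z (A x - B x)" for z x
    using assms by (simp add: clinear_op_scaleC scaleC_diff_right)
qed

lemma bounded_clinear_opI:
  assumes "clinear_op A" and "\<And>x. norm (A x) \<le> norm x * K"
  shows "bounded_clinear_op A"
  unfolding bounded_clinear_op_def
proof
  show "bounded_linear A"
    by (rule bounded_linear_intro[where K = K])
      (use assms in \<open>simp_all add: clinear_op_add clinear_op_scaleR\<close>)
qed (use assms(1) in \<open>simp add: clinear_op_scaleC\<close>)

lemma adjoint_op_eqI:
  assumes "\<And>u v. cinner (S u) v = cinner u (T v)"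
  shows "adjoint_op T = S"
  unfolding adjoint_op_def
proof (rule the_equality)
  fix S'
  assume "\<forall>u v. cinner (S' u) v = cinner u (T v)"
  thus "S' = S"
    using assms by (intro ext cinner_eqI_left) simp
qed (use assms in blast)

lemma op_nonneg_imaginary_part:
  assumes adj: "\<And>u v. cinner (S u) v = cinner u (T v)"
    and nonneg: "\<And>v. 0 \<le> \<sigma> * Im (cinner v (T v))"
  shows "op_nonneg (\<lambda>v. scaleC (complex_of_real \<sigma>) (scaleC (1 / (2 * \<i>)) (T v - S v)))"
  unfolding op_nonneg_def
proof
  fix v
  have "cinner v (S v) = cnj (cinner v (T v))"
    using cinner_commute[of v "S v"] adj[of v v] by simp
  hence "cinner v (scaleC (1 / (2 * \<i>)) (T v - S v)) = complex_of_real (Im (cinner v (T v)))"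
    by (simp add: cinner_scaleC_right cinner_diff_right complex_diff_cnj field_simps)
  hence "cinner v (scaleC (complex_of_real \<sigma>) (scaleC (1 / (2 * \<i>)) (T v - S v)))
      = complex_of_real (\<sigma> * Im (cinner v (T v)))"
    by (simp add: cinner_scaleC_right)
  thus "Im (cinner v (scaleC (complex_of_real \<sigma>) (scaleC (1 / (2 * \<i>)) (T v - S v)))) = 0 \<and>
      0 \<le> Re (cinner v (scaleC (complex_of_real \<sigma>) (scaleC (1 / (2 * \<i>)) (T v - S v))))"
    using nonneg[of v] by simp
qed

definition polarize :: "'a::chilbert_space \<Rightarrow> 'a \<Rightarrow> ('a \<Rightarrow> complex) \<Rightarrow> complex" where
  "polarize u v \<phi> =
     (\<phi> (u + v) - \<phi> (u - v) - \<i> * \<phi> (u + scaleC \<i> v) + \<i> * \<phi> (u - scaleC \<i> v)) / 4"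

lemma cinner_polarization:
  assumes "clinear_op A"
  shows "cinner u (A v) = polarize u v (\<lambda>w. cinner w (A w))"
  unfolding polarize_def clinear_op_add[OF assms] clinear_op_diff[OF assms]
    clinear_op_scaleC[OF assms]
  by (simp add: cinner_add_left cinner_add_right cinner_diff_left cinner_diff_right
      cinner_scaleC_left cinner_scaleC_right algebra_simps)

lemma norm_polarize_le:
  fixes u v :: "'a::chilbert_space"
  assumes "0 \<le> D" and \<phi>: "\<And>w. cmod (\<phi> w) \<le> D * (norm w)\<^sup>2"
  shows "cmod (polarize u v \<phi>) \<le> 2 * D * ((norm u)\<^sup>2 + (norm v)\<^sup>2)"
proof -
  have bound: "cmod (\<phi> x) \<le> 2 * D * ((norm u)\<^sup>2 + (norm v)\<^sup>2)"
    if "norm x \<le> norm u + norm v" for x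
  proof -
    have "(norm x)\<^sup>2 \<le> (norm u + norm v)\<^sup>2"
      using that by (intro power_mono) auto
    also have "\<dots> \<le> 2 * ((norm u)\<^sup>2 + (norm v)\<^sup>2)"
      using zero_le_power2[of "norm u - norm v"] unfolding power2_sum power2_diff distrib_left
      by linarith
    finally have "D * (norm x)\<^sup>2 \<le> D * (2 * ((norm u)\<^sup>2 + (norm v)\<^sup>2))"
      using \<open>0 \<le> D\<close> by (rule mult_left_mono)
    thus ?thesis using \<phi>[of x] by (simp add: algebra_simps)
  qed
  have ni: "norm (scaleC \<i> v) = norm v" by (simp add: norm_scaleC)
  let ?a = "\<phi> (u + v)" and ?b = "\<phi> (u - v)"
    and ?c = "\<i> * \<phi> (u + scaleC \<i> v)" and ?d = "\<i> * \<phi> (u - scaleC \<i> v)"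
  have "cmod (?a - ?b - ?c + ?d) \<le> cmod ?a + cmod ?b + cmod ?c + cmod ?d"
    using norm_triangle_ineq[of "?a - ?b - ?c" ?d] norm_triangle_ineq4[of "?a - ?b" ?c]
      norm_triangle_ineq4[of ?a ?b] by linarith
  also have "\<dots> \<le> 4 * (2 * D * ((norm u)\<^sup>2 + (norm v)\<^sup>2))"
    using bound[OF norm_triangle_ineq] bound[OF norm_triangle_ineq4]
      bound[OF norm_triangle_ineq[of u "scaleC \<i> v", unfolded ni]]
      bound[OF norm_triangle_ineq4[of u "scaleC \<i> v", unfolded ni]]
    unfolding norm_mult by simp
  finally show ?thesis
    unfolding polarize_def norm_divide by simp
qed

lemma norm_le_of_cinner_self_le:
  fixes A :: "'a::chilbert_space \<Rightarrow> 'a"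
  assumes A: "clinear_op A" and "0 \<le> D" and quad: "\<And>w. cmod (cinner w (A w)) \<le> D * (norm w)\<^sup>2"
  shows "norm (A v) \<le> 4 * D * norm v"
proof (cases "A v = 0")
  case True
  thus ?thesis using \<open>0 \<le> D\<close> by simp
next
  case False
  have "A 0 = 0" using clinear_op_scaleR[OF A, of 0 0] by simp
  hence "v \<noteq> 0" using False by blast
  define y where "y = scaleR (1 / norm (A v)) (A v)"
  define v' where "v' = scaleR (1 / norm v) v"
  have ny: "norm y = 1" using False by (simp add: y_def)
  have nv': "norm v' = 1" using \<open>v \<noteq> 0\<close> by (simp add: v'_def)
  have "cinner y (A v') = of_real (1 / norm (A v)) * of_real (1 / norm v) * cinner (A v) (A v)"
    by (simp add: y_def v'_def clinear_op_scaleR[OF A] cinner_scaleR_left cinner_scaleR_right)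
  also have "\<dots> = of_real (norm (A v) / norm v)"
    using False by (simp add: cinner_self power2_eq_square)
  finally have "norm (A v) / norm v = cmod (cinner y (A v'))"
    by (simp only: norm_of_real) simp
  also have "\<dots> = cmod (polarize y v' (\<lambda>w. cinner w (A w)))"
    by (simp only: cinner_polarization[OF A, of y v'])
  also have "\<dots> \<le> 2 * D * ((norm y)\<^sup>2 + (norm v')\<^sup>2)"
    by (rule norm_polarize_le[OF \<open>0 \<le> D\<close> quad])
  also have "\<dots> = 4 * D"
    by (simp add: ny nv')
  finally show ?thesis
    using \<open>v \<noteq> 0\<close> by (simp add: pos_divide_le_eq)
qed

lemma polarize_cnj_swap:
  assumes phase: "\<And>z w. cmod z = 1 \<Longrightarrow> \<phi> (scaleC z w) = \<phi> w"
  shows "polarize u v (\<lambda>w. cnj (\<phi> w)) = cnj (polarize v u \<phi>)"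
proof -
  have "\<phi> (v - u) = \<phi> (u - v)"
    using phase[of "- 1" "u - v"] by (simp add: scaleC_diff_right scaleC_minus_left scaleC_one)
  moreover have "\<phi> (v + scaleC \<i> u) = \<phi> (u - scaleC \<i> v)"
    using phase[of \<i> "u - scaleC \<i> v"]
    by (simp add: scaleC_diff_right scaleC_scaleC scaleC_minus_left scaleC_one add.commute)
  moreover have "\<phi> (v - scaleC \<i> u) = \<phi> (u + scaleC \<i> v)"
    using phase[of "- \<i>" "u + scaleC \<i> v"]
    by (simp add: scaleC_add_right scaleC_scaleC scaleC_minus_left scaleC_one)
  ultimately show ?thesis
    unfolding polarize_def by (simp add: add.commute field_simps)
qed

section \<open>The scalar measures of an operator-valued measure\<close>

lemma pos_op_measure_positive:
  assumes "pos_op_measure \<mu>" "A \<in> sets borel"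
  shows "positive_bounded_op (\<mu> (A \<inter> {0<..}))"
  using assms unfolding pos_op_measure_def by auto

lemma pos_op_measure_clinear:
  assumes "pos_op_measure \<mu>" "A \<in> sets borel"
  shows "clinear_op (\<mu> (A \<inter> {0<..}))"
  using pos_op_measure_positive[OF assms] linear_add[OF bounded_linear.linear]
  unfolding positive_bounded_op_def bounded_clinear_op_def clinear_op_def by blast

lemma pos_op_measure_bounded_linear:
  assumes "pos_op_measure \<mu>" "A \<in> sets borel"
  shows "bounded_linear (\<mu> (A \<inter> {0<..}))"
  using pos_op_measure_positive[OF assms]
  unfolding positive_bounded_op_def bounded_clinear_op_def by blast

lemma pos_op_measure_nonneg:
  assumes "pos_op_measure \<mu>" "A \<in> sets borel"
  shows "Im (cinner v (\<mu> (A \<inter> {0<..}) v)) = 0" "0 \<le> Re (cinner v (\<mu> (A \<inter> {0<..}) v))"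
  using pos_op_measure_positive[OF assms] unfolding positive_bounded_op_def op_nonneg_def by auto

lemma pos_op_measure_sums:
  assumes "pos_op_measure \<mu>" "\<And>n. A n \<in> sets borel" "disjoint_family A"
  shows "(\<lambda>n. cinner u (\<mu> (A n \<inter> {0<..}) v)) sums cinner u (\<mu> ((\<Union>n. A n) \<inter> {0<..}) v)"
proof -
  have "(\<lambda>n. cinner u (\<mu> (A n \<inter> {0<..}) v)) sums cinner u (\<mu> (\<Union>n. A n \<inter> {0<..}) v)"
    using assms(2,3)
    by (intro assms(1)[unfolded pos_op_measure_def, THEN conjunct2, THEN conjunct2, rule_format])
      (auto simp: disjoint_family_on_def)
  moreover have "(\<Union>n. A n \<inter> {0<..}) = (\<Union>n. A n) \<inter> {0<..}" by auto
  ultimately show ?thesis by simp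
qed

definition diag_measure :: "(real set \<Rightarrow> 'a::chilbert_space \<Rightarrow> 'a) \<Rightarrow> 'a \<Rightarrow> real measure" where
  "diag_measure \<mu> w = measure_of UNIV (sets borel) (\<lambda>A. ennreal (Re (cinner w (\<mu> (A \<inter> {0<..}) w))))"

lemma sigma_algebra_borel: "sigma_algebra UNIV (sets (borel :: real measure))"
  by (metis space_borel sets.sigma_algebra_axioms)

lemma sets_diag_measure [simp, measurable_cong]: "sets (diag_measure \<mu> w) = sets borel"
  unfolding diag_measure_def by (simp add: sigma_algebra.sets_measure_of_eq[OF sigma_algebra_borel])

lemma space_diag_measure [simp]: "space (diag_measure \<mu> w) = UNIV"
  unfolding diag_measure_def
  by (simp add: sigma_algebra.space_measure_of_eq[OF sigma_algebra_borel])

lemma emeasure_diag_measure: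
  assumes pos: "pos_op_measure \<mu>" and A: "A \<in> sets borel"
  shows "emeasure (diag_measure \<mu> w) A = ennreal (Re (cinner w (\<mu> (A \<inter> {0<..}) w)))"
  unfolding diag_measure_def
proof (rule emeasure_measure_of_sigma[OF sigma_algebra_borel _ _ A])
  show "positive (sets borel) (\<lambda>A. ennreal (Re (cinner w (\<mu> (A \<inter> {0<..}) w))))"
    using pos unfolding positive_def pos_op_measure_def by simp
  show "countably_additive (sets borel) (\<lambda>A. ennreal (Re (cinner w (\<mu> (A \<inter> {0<..}) w))))"
    unfolding countably_additive_def
  proof (intro allI impI)
    fix F :: "nat \<Rightarrow> real set"
    assume F: "range F \<subseteq> sets borel" "disjoint_family F" "\<Union> (range F) \<in> sets borel"
    have "(\<lambda>n. Re (cinner w (\<mu> (F n \<inter> {0<..}) w))) sums Re (cinner w (\<mu> (\<Union> (range F) \<inter> {0<..}) w))"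
      using pos_op_measure_sums[OF pos _ F(2)] F(1) by (intro sums_Re) auto
    moreover have "0 \<le> Re (cinner w (\<mu> (F n \<inter> {0<..}) w))" for n
      using pos_op_measure_nonneg(2)[OF pos] F(1) by auto
    ultimately show "(\<Sum>n. ennreal (Re (cinner w (\<mu> (F n \<inter> {0<..}) w)))) =
        ennreal (Re (cinner w (\<mu> (\<Union> (range F) \<inter> {0<..}) w)))"
      by (simp add: suminf_ennreal2 sums_iff)
  qed
qed

lemma measure_diag_measure:
  assumes "pos_op_measure \<mu>" "A \<in> sets borel"
  shows "measure (diag_measure \<mu> w) A = Re (cinner w (\<mu> (A \<inter> {0<..}) w))"
  using emeasure_diag_measure[OF assms] pos_op_measure_nonneg(2)[OF assms]
  by (simp add: measure_def)

lemma cinner_self_pos_op_measure: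
  assumes "pos_op_measure \<mu>" "A \<in> sets borel"
  shows "cinner w (\<mu> (A \<inter> {0<..}) w) = of_real (measure (diag_measure \<mu> w) A)"
  using measure_diag_measure[OF assms] pos_op_measure_nonneg(1)[OF assms]
  by (simp add: complex_eq_iff)

lemma finite_measure_diag_measure:
  assumes "pos_op_measure \<mu>"
  shows "finite_measure (diag_measure \<mu> w)"
  by (rule finite_measureI) (simp add: emeasure_diag_measure[OF assms])

lemma AE_diag_measure_pos:
  assumes "pos_op_measure \<mu>"
  shows "AE t in diag_measure \<mu> w. t > 0"
proof (rule AE_I[of _ _ "{..0}"])
  have "{..0::real} \<inter> {0<..} = {}" by auto
  thus "emeasure (diag_measure \<mu> w) {..0} = 0"
    using emeasure_diag_measure[OF assms, of "{..0}"] assms unfolding pos_op_measure_def by simp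
qed auto

lemma measure_diag_measure_UNIV_le:
  assumes "pos_op_measure \<mu>"
  shows "measure (diag_measure \<mu> w) UNIV \<le> onorm (\<mu> {0<..}) * (norm w)\<^sup>2"
proof -
  have bl: "bounded_linear (\<mu> {0<..})"
    using pos_op_measure_bounded_linear[OF assms, of UNIV] by simp
  have "measure (diag_measure \<mu> w) UNIV = Re (cinner w (\<mu> {0<..} w))"
    using measure_diag_measure[OF assms, of UNIV] by simp
  also have "\<dots> \<le> norm w * norm (\<mu> {0<..} w)"
    using complex_Re_le_cmod norm_cinner_le order_trans by blast
  also have "\<dots> \<le> norm w * (onorm (\<mu> {0<..}) * norm w)"
    by (intro mult_left_mono onorm[OF bl]) simp
  finally show ?thesis by (simp add: power2_eq_square mult_ac)
qed

lemma diag_measure_scaleC: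
  assumes pos: "pos_op_measure \<mu>" and "cmod z = 1"
  shows "diag_measure \<mu> (scaleC z w) = diag_measure \<mu> w"
proof (rule measure_eqI)
  fix A assume "A \<in> sets (diag_measure \<mu> (scaleC z w))"
  hence A: "A \<in> sets borel" by simp
  have "z * cnj z = 1"
    using \<open>cmod z = 1\<close> complex_norm_square[of z] by simp
  hence "cinner (scaleC z w) (\<mu> (A \<inter> {0<..}) (scaleC z w)) = cinner w (\<mu> (A \<inter> {0<..}) w)"
    by (simp add: clinear_op_scaleC[OF pos_op_measure_clinear[OF pos A]] cinner_scaleC_left
        cinner_scaleC_right)
  thus "emeasure (diag_measure \<mu> (scaleC z w)) A = emeasure (diag_measure \<mu> w) A"
    by (simp add: emeasure_diag_measure[OF pos A])
qed simp

definition grid_cell :: "real \<Rightarrow> real \<Rightarrow> nat \<Rightarrow> real set" where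
  "grid_cell a h j = {a + real j * h ..< a + real (Suc j) * h}"

definition step_approx :: "(real \<Rightarrow> complex) \<Rightarrow> real \<Rightarrow> real \<Rightarrow> nat \<Rightarrow> real \<Rightarrow> complex" where
  "step_approx c a h N t = (\<Sum>j<N. c (a + real j * h) * of_real (indicator (grid_cell a h j) t))"

lemma grid_cell_borel [measurable]: "grid_cell a h j \<in> sets borel"
  unfolding grid_cell_def by simp

lemma step_approx_borel [measurable]: "step_approx c a h N \<in> borel_measurable borel"
  unfolding step_approx_def by measurable

lemma mem_grid_cell_iff:
  assumes "h > 0"
  shows "t \<in> grid_cell a h j \<longleftrightarrow> a \<le> t \<and> nat \<lfloor>(t - a) / h\<rfloor> = j"
proof -
  let ?q = "(t - a) / h"
  have "t \<in> grid_cell a h j \<longleftrightarrow> real j \<le> ?q \<and> ?q < real j + 1"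
    using assms by (auto simp: grid_cell_def field_simps)
  also have "\<dots> \<longleftrightarrow> \<lfloor>?q\<rfloor> = int j"
    by (simp add: floor_eq_iff)
  also have "\<dots> \<longleftrightarrow> 0 \<le> ?q \<and> nat \<lfloor>?q\<rfloor> = j"
    by (auto simp: nat_eq_iff simp flip: zero_le_floor)
  also have "0 \<le> ?q \<longleftrightarrow> a \<le> t"
    using assms by (simp add: zero_le_divide_iff)
  finally show ?thesis .
qed

lemma step_approx_eq:
  assumes "h > 0"
  shows "step_approx c a h N t =
    (if a \<le> t \<and> t < a + real N * h then c (a + real (nat \<lfloor>(t - a) / h\<rfloor>) * h) else 0)"
proof -
  define j where "j = nat \<lfloor>(t - a) / h\<rfloor>"
  have "step_approx c a h N t
      = (\<Sum>i<N. if i = j then (if a \<le> t then c (a + real j * h) else 0) else 0)"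
    unfolding step_approx_def by (intro sum.cong) (auto simp: mem_grid_cell_iff[OF assms] j_def)
  also have "\<dots> = (if a \<le> t \<and> j < N then c (a + real j * h) else 0)"
    by simp
  moreover have "a \<le> t \<Longrightarrow> j < N \<longleftrightarrow> t < a + real N * h"
    using assms by (simp add: j_def nat_less_iff floor_less_iff field_simps)
  ultimately show ?thesis by (auto simp: j_def)
qed

lemma norm_step_approx_diff_le:
  assumes lip: "\<And>s t. cmod (c s - c t) \<le> L * \<bar>s - t\<bar>" and "h > 0"
  shows "cmod (step_approx c a h N t - c t * of_real (indicator {a..<a + real N * h} t)) \<le> L * h"
proof -
  have "0 \<le> L" using order_trans[OF norm_ge_zero lip[of 1 0]] by simp
  show ?thesis
  proof (cases "a \<le> t \<and> t < a + real N * h")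
    case True
    define j where "j = nat \<lfloor>(t - a) / h\<rfloor>"
    have "t \<in> grid_cell a h j"
      using True by (simp add: mem_grid_cell_iff[OF \<open>h > 0\<close>] j_def)
    hence "\<bar>a + real j * h - t\<bar> \<le> h"
      by (auto simp: grid_cell_def algebra_simps)
    hence "L * \<bar>a + real j * h - t\<bar> \<le> L * h"
      using \<open>0 \<le> L\<close> by (rule mult_left_mono)
    thus ?thesis
      using True lip[of "a + real j * h" t] by (simp add: step_approx_eq[OF \<open>h > 0\<close>] j_def)
  next
    case False
    thus ?thesis
      using \<open>0 \<le> L\<close> \<open>h > 0\<close>
      unfolding step_approx_eq[OF \<open>h > 0\<close>] if_not_P[OF False] by simp
  qed
qed

definition step_op :: "(real set \<Rightarrow> 'a::chilbert_space \<Rightarrow> 'a) \<Rightarrow> (real \<Rightarrow> complex)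
    \<Rightarrow> real \<Rightarrow> real \<Rightarrow> nat \<Rightarrow> 'a \<Rightarrow> 'a" where
  "step_op \<mu> c a h N v = (\<Sum>j<N. scaleC (c (a + real j * h)) (\<mu> (grid_cell a h j \<inter> {0<..}) v))"

lemma clinear_op_step_op:
  assumes "pos_op_measure \<mu>"
  shows "clinear_op (step_op \<mu> c a h N)"
proof (rule clinear_opI)
  note cl = pos_op_measure_clinear[OF assms grid_cell_borel]
  show "step_op \<mu> c a h N (x + y) = step_op \<mu> c a h N x + step_op \<mu> c a h N y" for x y
    by (simp add: step_op_def clinear_op_add[OF cl] scaleC_add_right sum.distrib)
  show "step_op \<mu> c a h N (scaleC z x) = scaleC z (step_op \<mu> c a h N x)" for z x
    by (simp add: step_op_def clinear_op_scaleC[OF cl] scaleC_sum_right scaleC_scaleC mult.commute)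
qed

lemma integrable_step_approx:
  assumes "pos_op_measure \<mu>"
  shows "integrable (diag_measure \<mu> w) (step_approx c a h N)"
proof -
  interpret finite_measure "diag_measure \<mu> w"
    by (rule finite_measure_diag_measure[OF assms])
  show ?thesis
    unfolding step_approx_def
    by (auto intro!: integrable_mult_right integrable_of_real integrable_real_indicator
        simp: less_top[symmetric])
qed

lemma cinner_self_step_op:
  assumes pos: "pos_op_measure \<mu>"
  shows "cinner w (step_op \<mu> c a h N w) = integral\<^sup>L (diag_measure \<mu> w) (step_approx c a h N)"
proof -
  interpret finite_measure "diag_measure \<mu> w"
    by (rule finite_measure_diag_measure[OF pos])
  have "integral\<^sup>L (diag_measure \<mu> w) (step_approx c a h N) =
      (\<Sum>j<N. c (a + real j * h) * of_real (measure (diag_measure \<mu> w) (grid_cell a h j)))"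
    unfolding step_approx_def
    by (subst Bochner_Integration.integral_sum)
      (auto intro!: integrable_mult_right integrable_of_real integrable_real_indicator
        simp: less_top[symmetric])
  thus ?thesis
    by (simp add: step_op_def cinner_sum_right cinner_scaleC_right
        cinner_self_pos_op_measure[OF pos grid_cell_borel])
qed

lemma rs_sum_eq_cinner_step_op:
  assumes "0 < a" "a \<le> b"
  shows "rs_sum \<mu> (\<lambda>t B. c t * cinner u (B v)) a b n
    = cinner u (step_op \<mu> c a ((b - a) / real n) n v)"
proof -
  have "grid_cell a ((b - a) / real n) j \<inter> {0<..} = grid_cell a ((b - a) / real n) j" for j
  proof -
    have "0 \<le> real j * ((b - a) / real n)" using assms by simp
    thus ?thesis using assms(1) by (auto simp: grid_cell_def)
  qed
  thus ?thesis
    by (simp add: rs_sum_def step_op_def grid_cell_def cinner_sum_right cinner_scaleC_right)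
qed

(* (n+1)^2 cells of width 1/(n+1): the mesh tends to 0 while the grid [0, n+1) exhausts (0, oo). *)
definition kernel_approx :: "(real set \<Rightarrow> 'a::chilbert_space \<Rightarrow> 'a) \<Rightarrow> (real \<Rightarrow> complex)
    \<Rightarrow> nat \<Rightarrow> 'a \<Rightarrow> 'a" where
  "kernel_approx \<mu> c n = step_op \<mu> c 0 (1 / real (Suc n)) ((Suc n)\<^sup>2)"

definition kernel_op :: "(real set \<Rightarrow> 'a::chilbert_space \<Rightarrow> 'a) \<Rightarrow> (real \<Rightarrow> complex) \<Rightarrow> 'a \<Rightarrow> 'a" where
  "kernel_op \<mu> c v = lim (\<lambda>n. kernel_approx \<mu> c n v)"

section \<open>Integrating an admissible kernel against \<open>\<mu>\<close>\<close>

lemma AE_diag_measure_bound: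
  assumes "pos_op_measure \<mu>" and "\<And>t. t > 0 \<Longrightarrow> cmod (g t) \<le> B"
  shows "AE t in diag_measure \<mu> w. cmod (g t) \<le> B"
  using AE_diag_measure_pos[OF assms(1)] by eventually_elim (rule assms(2))

lemma integrable_diag_measure:
  assumes "pos_op_measure \<mu>" and [measurable]: "g \<in> borel_measurable borel"
    and "\<And>t. t > 0 \<Longrightarrow> cmod (g t) \<le> B"
  shows "integrable (diag_measure \<mu> w) (g :: real \<Rightarrow> complex)"
proof -
  interpret finite_measure "diag_measure \<mu> w"
    by (rule finite_measure_diag_measure[OF assms(1)])
  show ?thesis
    by (rule integrable_const_bound[OF AE_diag_measure_bound[OF assms(1,3)]]) measurable
qed

lemma norm_integral_diag_measure_le:
  assumes "pos_op_measure \<mu>" and [measurable]: "g \<in> borel_measurable borel"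
    and "\<And>t. t > 0 \<Longrightarrow> cmod (g t) \<le> B"
  shows "cmod (integral\<^sup>L (diag_measure \<mu> w) g) \<le> B * measure (diag_measure \<mu> w) UNIV"
proof -
  interpret finite_measure "diag_measure \<mu> w"
    by (rule finite_measure_diag_measure[OF assms(1)])
  have "cmod (integral\<^sup>L (diag_measure \<mu> w) g) \<le> (\<integral>t. cmod (g t) \<partial>diag_measure \<mu> w)"
    by (rule integral_norm_bound)
  also have "\<dots> \<le> (\<integral>t. B \<partial>diag_measure \<mu> w)"
    using AE_diag_measure_bound[OF assms(1,3)]
    by (intro integral_mono_AE integrable_diag_measure[OF assms] integrable_norm) auto
  finally show ?thesis by (simp add: mult.commute)
qed

lemma has_mu_integral_unique:
  assumes "has_mu_integral \<mu> F c\<^sub>1" "has_mu_integral \<mu> F c\<^sub>2"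
  shows "c\<^sub>1 = c\<^sub>2"
  using assms unfolding has_mu_integral_def
  by (intro tendsto_unique[of "at_right (0::real) \<times>\<^sub>F at_top"]) (auto simp: prod_filter_eq_bot)

lemma N_mu_eqI:
  assumes "bounded_clinear_op T"
    and "\<And>u v. has_mu_integral \<mu> (\<lambda>t B. N_kernel z t / complex_of_real pi * cinner u (B v))
      (cinner u (T v))"
  shows "N_mu \<mu> z = T"
  unfolding N_mu_def
proof (rule the_equality)
  fix S
  assume "bounded_clinear_op S \<and>
    (\<forall>u v. has_mu_integral \<mu> (\<lambda>t B. N_kernel z t / complex_of_real pi * cinner u (B v))
      (cinner u (S v)))"
  thus "S = T"
    using assms(2) by (intro ext cinner_eqI) (blast intro: has_mu_integral_unique)
qed (use assms in blast)

lemma eventually_at_right_0_at_top_less: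
  "eventually (\<lambda>p. 0 < fst p \<and> fst p < snd p) (at_right (0::real) \<times>\<^sub>F at_top)"
  unfolding eventually_prod_filter
proof (intro exI conjI)
  show "eventually (\<lambda>a. a \<in> {0<..<1::real}) (at_right 0)"
    by (rule eventually_at_right_real) simp
  show "eventually (\<lambda>b. 1 < b) (at_top :: real filter)"
    by (rule eventually_gt_at_top)
qed auto

locale admissible_kernel =
  fixes \<mu> :: "real set \<Rightarrow> 'a::chilbert_space \<Rightarrow> 'a" and c :: "real \<Rightarrow> complex" and L K K' :: real
  assumes pos: "pos_op_measure \<mu>"
    and c_borel [measurable]: "c \<in> borel_measurable borel"
    and lipschitz: "\<And>s t. cmod (c s - c t) \<le> L * \<bar>s - t\<bar>"
    and bounded: "\<And>t. cmod (c t) \<le> K"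
    and decay: "\<And>t. t > 0 \<Longrightarrow> cmod (c t) \<le> K' / t"
    \<comment> \<open>makes the tail of \<open>\<integral> c d\<langle>w, \<mu> w\<rangle>\<close> small uniformly in \<open>norm w \<le> 1\<close>, hence the
      norm convergence of the step operators\<close>
begin

lemma lipschitz_const_nonneg: "0 \<le> L"
  using order_trans[OF norm_ge_zero lipschitz[of 1 0]] by simp

lemma bound_nonneg: "0 \<le> K"
  using order_trans[OF norm_ge_zero bounded] .

lemma decay_const_nonneg: "0 \<le> K'"
  using order_trans[OF norm_ge_zero decay[of 1]] by simp

lemma integrable_kernel: "integrable (diag_measure \<mu> w) c"
  using integrable_diag_measure[OF pos c_borel bounded] .

lemma integrable_kernel_indicator:
  "integrable (diag_measure \<mu> w) (\<lambda>t. c t * of_real (indicator A t))"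
  if [measurable]: "A \<in> sets borel"
  using bound_nonneg bounded
  by (intro integrable_diag_measure[OF pos, where B = K]) (auto simp: indicator_def norm_mult)

lemma tendsto_integral_step_approx_Ico:
  assumes "a < b"
  shows "(\<lambda>n. integral\<^sup>L (diag_measure \<mu> w) (step_approx c a ((b - a) / real n) n))
    \<longlonglongrightarrow> integral\<^sup>L (diag_measure \<mu> w) (\<lambda>t. c t * of_real (indicator {a..<b} t))"
proof -
  let ?M = "measure (diag_measure \<mu> w) UNIV"
  have "eventually (\<lambda>n. cmod (integral\<^sup>L (diag_measure \<mu> w) (step_approx c a ((b - a) / real n) n)
      - integral\<^sup>L (diag_measure \<mu> w) (\<lambda>t. c t * of_real (indicator {a..<b} t)))
      \<le> L * ((b - a) / real n) * ?M) sequentially"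
    using eventually_gt_at_top[of 0]
  proof eventually_elim
    case (elim n)
    define h where "h = (b - a) / real n"
    have "h > 0" and "a + real n * h = b"
      using assms elim by (simp_all add: h_def)
    have "integral\<^sup>L (diag_measure \<mu> w) (step_approx c a h n)
        - integral\<^sup>L (diag_measure \<mu> w) (\<lambda>t. c t * of_real (indicator {a..<b} t))
        = integral\<^sup>L (diag_measure \<mu> w)
            (\<lambda>t. step_approx c a h n t - c t * of_real (indicator {a..<b} t))"
      using integrable_step_approx[OF pos] integrable_kernel_indicator
      by (simp add: Bochner_Integration.integral_diff)
    also have "cmod \<dots> \<le> L * h * ?M"
      using norm_step_approx_diff_le[OF lipschitz \<open>h > 0\<close>, of a n] \<open>a + real n * h = b\<close>
      by (intro norm_integral_diag_measure_le[OF pos]) auto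
    finally show ?case by (simp add: h_def)
  qed
  moreover have "(\<lambda>n. L * ((b - a) / real n) * ?M) \<longlonglongrightarrow> 0"
    by (intro tendsto_mult_left_zero tendsto_mult_right_zero tendsto_divide_0[OF tendsto_const]
        filterlim_at_top_imp_at_infinity filterlim_real_sequentially)
  ultimately show ?thesis
    by (subst LIM_zero_iff[symmetric]) (rule Lim_null_comparison)
qed

lemma tendsto_integral_Iio_at_right_0:
  "((\<lambda>a. \<integral>t. c t * of_real (indicator {..<a} t) \<partial>diag_measure \<mu> w) \<longlongrightarrow> 0) (at_right 0)"
proof -
  interpret finite_measure "diag_measure \<mu> w"
    by (rule finite_measure_diag_measure[OF pos])
  have "((\<lambda>r. \<integral>t. c t * of_real (indicator {..<inverse r} t) \<partial>diag_measure \<mu> w)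
      \<longlongrightarrow> (\<integral>t. 0 \<partial>diag_measure \<mu> w)) at_top"
  proof (rule integral_dominated_convergence_at_top[where w = "\<lambda>_. K"])
    show "AE t in diag_measure \<mu> w.
        ((\<lambda>r. c t * of_real (indicator {..<inverse r} t)) \<longlongrightarrow> 0) at_top"
      using AE_diag_measure_pos[OF pos]
    proof eventually_elim
      case (elim t)
      have "eventually (\<lambda>r. inverse r < t) at_top"
        using eventually_gt_at_top[of "inverse t"]
        by eventually_elim (use elim in \<open>auto dest: less_imp_inverse_less\<close>)
      hence "eventually (\<lambda>r. c t * of_real (indicator {..<inverse r} t) = 0) at_top"
        by eventually_elim (auto simp: indicator_def)
      thus ?case by (rule tendsto_eventually)
    qed
    show "\<forall>\<^sub>F r in at_top. AE t in diag_measure \<mu> w.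
        norm (c t * of_real (indicator {..<inverse r} t)) \<le> K"
      using bounded bound_nonneg
      by (intro always_eventually allI AE_I2) (auto simp: indicator_def norm_mult)
  qed auto
  thus ?thesis by (simp add: filterlim_at_right_to_top)
qed

lemma tendsto_integral_Ici_at_top:
  "((\<lambda>b. \<integral>t. c t * of_real (indicator {b..} t) \<partial>diag_measure \<mu> w) \<longlongrightarrow> 0) at_top"
proof -
  interpret finite_measure "diag_measure \<mu> w"
    by (rule finite_measure_diag_measure[OF pos])
  have "((\<lambda>b. \<integral>t. c t * of_real (indicator {b..} t) \<partial>diag_measure \<mu> w)
      \<longlongrightarrow> (\<integral>t. 0 \<partial>diag_measure \<mu> w)) at_top"
  proof (rule integral_dominated_convergence_at_top[where w = "\<lambda>_. K"])
    show "AE t in diag_measure \<mu> w. ((\<lambda>b. c t * of_real (indicator {b..} t)) \<longlongrightarrow> 0) at_top"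
    proof (rule AE_I2)
      fix t :: real
      have "eventually (\<lambda>b. c t * of_real (indicator {b..} t) = 0) at_top"
        using eventually_gt_at_top[of t] by eventually_elim (auto simp: indicator_def)
      thus "((\<lambda>b. c t * of_real (indicator {b..} t)) \<longlongrightarrow> 0) at_top"
        by (rule tendsto_eventually)
    qed
    show "\<forall>\<^sub>F b in at_top. AE t in diag_measure \<mu> w. norm (c t * of_real (indicator {b..} t)) \<le> K"
      using bounded bound_nonneg
      by (intro always_eventually allI AE_I2) (auto simp: indicator_def norm_mult)
  qed auto
  thus ?thesis by simp
qed

lemma tendsto_integral_Ico:
  "((\<lambda>p. \<integral>t. c t * of_real (indicator {fst p..<snd p} t) \<partial>diag_measure \<mu> w)
    \<longlongrightarrow> integral\<^sup>L (diag_measure \<mu> w) c) (at_right 0 \<times>\<^sub>F at_top)"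
proof -
  let ?I = "\<lambda>A. \<integral>t. c t * of_real (indicator A t) \<partial>diag_measure \<mu> w"
  have split: "?I {a..<b} = integral\<^sup>L (diag_measure \<mu> w) c - ?I {..<a} - ?I {b..}"
    if "a \<le> b" for a b
  proof -
    have "c t * of_real (indicator {a..<b} t)
        = c t - c t * of_real (indicator {..<a} t) - c t * of_real (indicator {b..} t)" for t
      using that by (auto simp: indicator_def)
    thus ?thesis
      using integrable_kernel integrable_kernel_indicator by simp
  qed
  have "((\<lambda>p. integral\<^sup>L (diag_measure \<mu> w) c - ?I {..<fst p} - ?I {snd p..})
      \<longlongrightarrow> integral\<^sup>L (diag_measure \<mu> w) c - 0 - 0) (at_right 0 \<times>\<^sub>F at_top)"
    by (intro tendsto_diff tendsto_const
        filterlim_compose[OF tendsto_integral_Iio_at_right_0 filterlim_fst]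
        filterlim_compose[OF tendsto_integral_Ici_at_top filterlim_snd])
  moreover have "eventually (\<lambda>p. integral\<^sup>L (diag_measure \<mu> w) c - ?I {..<fst p} - ?I {snd p..}
      = ?I {fst p..<snd p}) (at_right 0 \<times>\<^sub>F at_top)"
    using eventually_at_right_0_at_top_less by eventually_elim (simp add: split)
  ultimately show ?thesis
    by (simp add: Lim_transform_eventually)
qed

lemma tendsto_rs_sum:
  assumes "0 < a" "a < b"
  shows "rs_sum \<mu> (\<lambda>t B. c t * cinner u (B v)) a b \<longlonglongrightarrow>
    polarize u v (\<lambda>w. \<integral>t. c t * of_real (indicator {a..<b} t) \<partial>diag_measure \<mu> w)"
proof -
  have eq: "rs_sum \<mu> (\<lambda>t B. c t * cinner u (B v)) a b
      = (\<lambda>n. polarize u v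
          (\<lambda>w. integral\<^sup>L (diag_measure \<mu> w) (step_approx c a ((b - a) / real n) n)))"
    by (rule ext) (simp only: rs_sum_eq_cinner_step_op[OF assms(1) less_imp_le[OF assms(2)]]
        cinner_polarization[OF clinear_op_step_op[OF pos], where u = u and v = v]
        cinner_self_step_op[OF pos])
  show ?thesis
    unfolding eq polarize_def
    by (intro tendsto_intros tendsto_integral_step_approx_Ico assms(2)) simp
qed

lemma has_mu_integral_polarize:
  "has_mu_integral \<mu> (\<lambda>t B. c t * cinner u (B v))
    (polarize u v (\<lambda>w. integral\<^sup>L (diag_measure \<mu> w) c))"
  unfolding has_mu_integral_def
proof (intro conjI allI impI)
  fix a b :: real
  assume "0 < a" "a < b"
  thus "convergent (rs_sum \<mu> (\<lambda>t B. c t * cinner u (B v)) a b)"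
    unfolding convergent_def by (blast intro: tendsto_rs_sum)
next
  have "((\<lambda>p. polarize u v (\<lambda>w. \<integral>t. c t * of_real (indicator {fst p..<snd p} t) \<partial>diag_measure \<mu> w))
      \<longlongrightarrow> polarize u v (\<lambda>w. integral\<^sup>L (diag_measure \<mu> w) c)) (at_right 0 \<times>\<^sub>F at_top)"
    unfolding polarize_def by (intro tendsto_intros tendsto_integral_Ico) simp
  moreover have "eventually (\<lambda>p.
      polarize u v (\<lambda>w. \<integral>t. c t * of_real (indicator {fst p..<snd p} t) \<partial>diag_measure \<mu> w)
      = (\<lambda>(a, b). rs_on \<mu> (\<lambda>t B. c t * cinner u (B v)) a b) p) (at_right 0 \<times>\<^sub>F at_top)"
    using eventually_at_right_0_at_top_less
    by eventually_elim (auto simp: rs_on_def split_beta limI[OF tendsto_rs_sum])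
  ultimately show "((\<lambda>(a, b). rs_on \<mu> (\<lambda>t B. c t * cinner u (B v)) a b)
      \<longlongrightarrow> polarize u v (\<lambda>w. integral\<^sup>L (diag_measure \<mu> w) c)) (at_right 0 \<times>\<^sub>F at_top)"
    by (rule Lim_transform_eventually)
qed

lemma norm_step_approx_sub_le:
  assumes "t > 0"
  shows "cmod (step_approx c 0 (1 / real (Suc n)) ((Suc n)\<^sup>2) t - c t) \<le> (L + K') / real (Suc n)"
proof -
  let ?s = "step_approx c 0 (1 / real (Suc n)) ((Suc n)\<^sup>2) t"
  have "0 + real ((Suc n)\<^sup>2) * (1 / real (Suc n)) = real (Suc n)"
    by (simp add: field_simps power2_eq_square)
  hence approx: "cmod (?s - c t * of_real (indicator {0..<real (Suc n)} t)) \<le> L / real (Suc n)"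
    using norm_step_approx_diff_le[OF lipschitz, of "1 / real (Suc n)" 0 "(Suc n)\<^sup>2" t] by simp
  show ?thesis
  proof (cases "t < real (Suc n)")
    case True
    hence "cmod (?s - c t) \<le> L / real (Suc n)"
      using approx assms by simp
    also have "\<dots> \<le> (L + K') / real (Suc n)"
      using decay_const_nonneg by (intro divide_right_mono) auto
    finally show ?thesis .
  next
    case False
    have "cmod (c t) \<le> K' / t" by (rule decay[OF assms])
    also have "\<dots> \<le> K' / real (Suc n)"
      using False decay_const_nonneg by (intro divide_left_mono) auto
    finally have "cmod ?s + cmod (c t) \<le> (L + K') / real (Suc n)"
      using approx False by (simp add: add_divide_distrib)
    thus ?thesis
      using norm_triangle_ineq4[of ?s "c t"] by linarith
  qed
qed

lemma norm_integral_step_approx_sub_le: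
  "cmod (integral\<^sup>L (diag_measure \<mu> w) (step_approx c 0 (1 / real (Suc n)) ((Suc n)\<^sup>2))
      - integral\<^sup>L (diag_measure \<mu> w) c)
    \<le> (L + K') / real (Suc n) * measure (diag_measure \<mu> w) UNIV"
proof -
  have "integral\<^sup>L (diag_measure \<mu> w) (step_approx c 0 (1 / real (Suc n)) ((Suc n)\<^sup>2))
      - integral\<^sup>L (diag_measure \<mu> w) c
      = integral\<^sup>L (diag_measure \<mu> w) (\<lambda>t. step_approx c 0 (1 / real (Suc n)) ((Suc n)\<^sup>2) t - c t)"
    using integrable_step_approx[OF pos] integrable_kernel by simp
  also have "cmod \<dots> \<le> (L + K') / real (Suc n) * measure (diag_measure \<mu> w) UNIV"
    by (rule norm_integral_diag_measure_le[OF pos _ norm_step_approx_sub_le]) measurable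
  finally show ?thesis .
qed

lemma tendsto_integral_step_approx:
  "(\<lambda>n. integral\<^sup>L (diag_measure \<mu> w) (step_approx c 0 (1 / real (Suc n)) ((Suc n)\<^sup>2)))
    \<longlonglongrightarrow> integral\<^sup>L (diag_measure \<mu> w) c"
proof -
  have "(\<lambda>n. (L + K') / real (Suc n) * measure (diag_measure \<mu> w) UNIV) \<longlonglongrightarrow> 0"
    by (intro tendsto_mult_left_zero LIMSEQ_Suc[OF lim_const_over_n])
  thus ?thesis
    by (subst LIM_zero_iff[symmetric])
      (rule Lim_null_comparison[OF always_eventually[OF allI[OF norm_integral_step_approx_sub_le]]])
qed

lemma norm_kernel_approx_diff_le:
  "norm (kernel_approx \<mu> c m v - kernel_approx \<mu> c n v)
    \<le> 4 * ((L + K') * (1 / real (Suc m) + 1 / real (Suc n)) * onorm (\<mu> {0<..})) * norm v"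
proof (rule norm_le_of_cinner_self_le)
  let ?s = "\<lambda>w k. integral\<^sup>L (diag_measure \<mu> w) (step_approx c 0 (1 / real (Suc k)) ((Suc k)\<^sup>2))"
  show "clinear_op (\<lambda>v. kernel_approx \<mu> c m v - kernel_approx \<mu> c n v)"
    unfolding kernel_approx_def by (intro clinear_op_compose_sub clinear_op_step_op pos)
  show "0 \<le> (L + K') * (1 / real (Suc m) + 1 / real (Suc n)) * onorm (\<mu> {0<..})"
    using lipschitz_const_nonneg decay_const_nonneg
      onorm_pos_le[OF pos_op_measure_bounded_linear[OF pos, of UNIV]] by simp
  fix w
  have "cmod (cinner w (kernel_approx \<mu> c m w - kernel_approx \<mu> c n w))
      = cmod ((?s w m - integral\<^sup>L (diag_measure \<mu> w) c)
          - (?s w n - integral\<^sup>L (diag_measure \<mu> w) c))"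
    by (simp add: kernel_approx_def cinner_diff_right cinner_self_step_op[OF pos])
  also have "\<dots> \<le> (L + K') / real (Suc m) * measure (diag_measure \<mu> w) UNIV
      + (L + K') / real (Suc n) * measure (diag_measure \<mu> w) UNIV"
    by (rule order_trans[OF norm_triangle_ineq4 add_mono])
      (rule norm_integral_step_approx_sub_le)+
  also have "\<dots> = (L + K') * (1 / real (Suc m) + 1 / real (Suc n)) * measure (diag_measure \<mu> w) UNIV"
    by (simp add: algebra_simps)
  also have "\<dots> \<le> (L + K') * (1 / real (Suc m) + 1 / real (Suc n)) * (onorm (\<mu> {0<..}) * (norm w)\<^sup>2)"
    using lipschitz_const_nonneg decay_const_nonneg
    by (intro mult_left_mono measure_diag_measure_UNIV_le[OF pos]) auto
  finally show "cmod (cinner w (kernel_approx \<mu> c m w - kernel_approx \<mu> c n w))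
      \<le> (L + K') * (1 / real (Suc m) + 1 / real (Suc n)) * onorm (\<mu> {0<..}) * (norm w)\<^sup>2"
    by (simp add: mult.assoc)
qed

lemma Cauchy_kernel_approx: "Cauchy (\<lambda>n. kernel_approx \<mu> c n v)"
proof (rule metric_CauchyI)
  fix e :: real
  assume "0 < e"
  define C where "C = 4 * (L + K') * onorm (\<mu> {0<..}) * norm v"
  have "(\<lambda>n. C / real (Suc n)) \<longlonglongrightarrow> 0"
    by (rule LIMSEQ_Suc[OF lim_const_over_n])
  hence "eventually (\<lambda>n. C / real (Suc n) < e / 2) sequentially"
    using \<open>0 < e\<close> by (intro order_tendstoD(2)) auto
  then obtain M where M: "\<And>n. M \<le> n \<Longrightarrow> C / real (Suc n) < e / 2"
    by (auto simp: eventually_sequentially)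
  show "\<exists>M. \<forall>m\<ge>M. \<forall>n\<ge>M. dist (kernel_approx \<mu> c m v) (kernel_approx \<mu> c n v) < e"
  proof (intro exI allI impI)
    fix m n
    assume "M \<le> m" "M \<le> n"
    have "dist (kernel_approx \<mu> c m v) (kernel_approx \<mu> c n v)
        \<le> C / real (Suc m) + C / real (Suc n)"
      using norm_kernel_approx_diff_le[of m v n] by (simp add: dist_norm C_def algebra_simps)
    also have "\<dots> < e"
      using M[OF \<open>M \<le> m\<close>] M[OF \<open>M \<le> n\<close>] by linarith
    finally show "dist (kernel_approx \<mu> c m v) (kernel_approx \<mu> c n v) < e" .
  qed
qed

lemma tendsto_kernel_op: "(\<lambda>n. kernel_approx \<mu> c n v) \<longlonglongrightarrow> kernel_op \<mu> c v"
  unfolding kernel_op_def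
  using Cauchy_kernel_approx by (simp add: Cauchy_convergent_iff convergent_LIMSEQ_iff)

lemma clinear_op_kernel_op: "clinear_op (kernel_op \<mu> c)"
proof (rule clinear_opI)
  have approx: "clinear_op (kernel_approx \<mu> c n)" for n
    unfolding kernel_approx_def by (rule clinear_op_step_op[OF pos])
  show "kernel_op \<mu> c (x + y) = kernel_op \<mu> c x + kernel_op \<mu> c y" for x y
    using tendsto_kernel_op[of "x + y"] tendsto_add[OF tendsto_kernel_op tendsto_kernel_op]
    by (simp add: clinear_op_add[OF approx] LIMSEQ_unique)
  show "kernel_op \<mu> c (scaleC z x) = scaleC z (kernel_op \<mu> c x)" for z x
    using tendsto_kernel_op[of "scaleC z x"]
      bounded_linear.tendsto[OF bounded_linear_scaleC tendsto_kernel_op]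
    by (simp add: clinear_op_scaleC[OF approx] LIMSEQ_unique)
qed

lemma cinner_self_kernel_op: "cinner w (kernel_op \<mu> c w) = integral\<^sup>L (diag_measure \<mu> w) c"
proof (rule LIMSEQ_unique)
  show "(\<lambda>n. cinner w (kernel_approx \<mu> c n w)) \<longlonglongrightarrow> cinner w (kernel_op \<mu> c w)"
    by (rule bounded_linear.tendsto[OF bounded_linear_cinner_right tendsto_kernel_op])
  show "(\<lambda>n. cinner w (kernel_approx \<mu> c n w)) \<longlonglongrightarrow> integral\<^sup>L (diag_measure \<mu> w) c"
    unfolding kernel_approx_def cinner_self_step_op[OF pos] by (rule tendsto_integral_step_approx)
qed

lemma cinner_kernel_op:
  "cinner u (kernel_op \<mu> c v) = polarize u v (\<lambda>w. integral\<^sup>L (diag_measure \<mu> w) c)"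
  by (simp only: cinner_polarization[OF clinear_op_kernel_op, where u = u and v = v]
      cinner_self_kernel_op)

lemma bounded_clinear_op_kernel_op: "bounded_clinear_op (kernel_op \<mu> c)"
proof (rule bounded_clinear_opI[OF clinear_op_kernel_op])
  fix v
  have "norm (kernel_op \<mu> c v) \<le> 4 * (K * onorm (\<mu> {0<..})) * norm v"
  proof (rule norm_le_of_cinner_self_le[OF clinear_op_kernel_op])
    show "0 \<le> K * onorm (\<mu> {0<..})"
      using bound_nonneg onorm_pos_le[OF pos_op_measure_bounded_linear[OF pos, of UNIV]] by simp
    fix w
    have "cmod (cinner w (kernel_op \<mu> c w)) \<le> K * measure (diag_measure \<mu> w) UNIV"
      unfolding cinner_self_kernel_op
      by (rule norm_integral_diag_measure_le[OF pos c_borel bounded])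
    also have "\<dots> \<le> K * (onorm (\<mu> {0<..}) * (norm w)\<^sup>2)"
      using bound_nonneg by (intro mult_left_mono measure_diag_measure_UNIV_le[OF pos])
    finally show "cmod (cinner w (kernel_op \<mu> c w)) \<le> K * onorm (\<mu> {0<..}) * (norm w)\<^sup>2"
      by (simp add: mult.assoc)
  qed
  thus "norm (kernel_op \<mu> c v) \<le> norm v * (4 * (K * onorm (\<mu> {0<..})))"
    by (simp add: mult.commute)
qed

lemma has_mu_integral_kernel_op:
  "has_mu_integral \<mu> (\<lambda>t B. c t * cinner u (B v)) (cinner u (kernel_op \<mu> c v))"
  unfolding cinner_kernel_op by (rule has_mu_integral_polarize)

lemma admissible_kernel_cnj: "admissible_kernel \<mu> (\<lambda>t. cnj (c t)) L K K'"
proof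
  show "(\<lambda>t. cnj (c t)) \<in> borel_measurable borel"
    by (rule borel_measurable_continuous_on[OF _ c_borel]) (intro continuous_intros)
  show "cmod (cnj (c s) - cnj (c t)) \<le> L * \<bar>s - t\<bar>" for s t
    using lipschitz[of s t] by (simp flip: complex_cnj_diff)
qed (use pos bounded decay in simp_all)

lemma N_mu_eq_kernel_op:
  assumes "c = (\<lambda>t. N_kernel z t / complex_of_real pi)"
  shows "N_mu \<mu> z = kernel_op \<mu> c"
  using bounded_clinear_op_kernel_op has_mu_integral_kernel_op
  unfolding assms by (rule N_mu_eqI)

lemma cinner_kernel_op_cnj: "cinner (kernel_op \<mu> (\<lambda>t. cnj (c t)) u) v = cinner u (kernel_op \<mu> c v)"
proof -
  interpret conj: admissible_kernel \<mu> "\<lambda>t. cnj (c t)" L K K'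
    by (rule admissible_kernel_cnj)
  have phase: "integral\<^sup>L (diag_measure \<mu> (scaleC z w)) c = integral\<^sup>L (diag_measure \<mu> w) c"
    if "cmod z = 1" for z w
    by (simp add: diag_measure_scaleC[OF pos that])
  have "cinner (kernel_op \<mu> (\<lambda>t. cnj (c t)) u) v = cnj (cinner v (kernel_op \<mu> (\<lambda>t. cnj (c t)) u))"
    by (rule cinner_commute)
  also have "\<dots> = cnj (polarize v u (\<lambda>w. cnj (integral\<^sup>L (diag_measure \<mu> w) c)))"
    by (simp add: conj.cinner_kernel_op)
  also have "\<dots> = cinner u (kernel_op \<mu> c v)"
    by (simp add: polarize_cnj_swap[OF phase] cinner_kernel_op)
  finally show ?thesis .
qed

lemma adjoint_kernel_op: "adjoint_op (kernel_op \<mu> c) = kernel_op \<mu> (\<lambda>t. cnj (c t))"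
  by (rule adjoint_op_eqI) (rule cinner_kernel_op_cnj)

lemma adjoint_kernel_op_cnj: "adjoint_op (kernel_op \<mu> (\<lambda>t. cnj (c t))) = kernel_op \<mu> c"
proof -
  interpret conj: admissible_kernel \<mu> "\<lambda>t. cnj (c t)" L K K'
    by (rule admissible_kernel_cnj)
  show ?thesis
    using conj.adjoint_kernel_op by simp
qed

lemma Im_cinner_self_kernel_op_nonneg:
  assumes "\<And>t. 0 \<le> \<sigma> * Im (c t)"
  shows "0 \<le> \<sigma> * Im (cinner v (kernel_op \<mu> c v))"
proof -
  have "\<sigma> * Im (cinner v (kernel_op \<mu> c v)) = (\<integral>t. \<sigma> * Im (c t) \<partial>diag_measure \<mu> v)"
    using integrable_kernel by (simp add: cinner_self_kernel_op)
  also have "\<dots> \<ge> 0"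
    using assms by (intro integral_nonneg_AE) auto
  finally show ?thesis .
qed

end

section \<open>The kernel of \<open>N_mu\<close>\<close>

lemma abs_le_norm_N_denominator:
  "\<bar>x\<bar> \<le> cmod (complex_of_real t - \<i> * complex_of_real x)"
  "\<bar>t\<bar> \<le> cmod (complex_of_real t - \<i> * complex_of_real x)"
  using abs_Im_le_cmod[of "complex_of_real t - \<i> * complex_of_real x"]
    abs_Re_le_cmod[of "complex_of_real t - \<i> * complex_of_real x"] by simp_all

lemma abs_div_one_plus_square_diff_le: "\<bar>s / (1 + s\<^sup>2) - t / (1 + t\<^sup>2)\<bar> \<le> \<bar>s - (t::real)\<bar>"
proof -
  have pos: "1 + s\<^sup>2 > 0" "1 + t\<^sup>2 > 0" by (simp_all add: add_pos_nonneg)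
  have "2 * \<bar>s * t\<bar> \<le> s\<^sup>2 + t\<^sup>2"
    using zero_le_power2[of "\<bar>s\<bar> - \<bar>t\<bar>"] unfolding power2_diff by (simp add: abs_mult)
  moreover have "\<bar>1 - s * t\<bar> \<le> 1 + \<bar>s * t\<bar>"
    using abs_triangle_ineq4[of 1 "s * t"] by simp
  moreover have "(1 + s\<^sup>2) * (1 + t\<^sup>2) = 1 + s\<^sup>2 + t\<^sup>2 + s\<^sup>2 * t\<^sup>2"
    by (simp add: algebra_simps)
  moreover have "0 \<le> s\<^sup>2 * t\<^sup>2" "0 \<le> \<bar>s * t\<bar>" by simp_all
  ultimately have "\<bar>1 - s * t\<bar> \<le> (1 + s\<^sup>2) * (1 + t\<^sup>2)"
    by linarith
  hence "\<bar>(1 - s * t) / ((1 + s\<^sup>2) * (1 + t\<^sup>2))\<bar> \<le> 1"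
    using pos by (simp add: abs_divide abs_mult)
  hence "\<bar>s - t\<bar> * \<bar>(1 - s * t) / ((1 + s\<^sup>2) * (1 + t\<^sup>2))\<bar> \<le> \<bar>s - t\<bar>"
    by (intro mult_left_le) simp_all
  moreover have "s / (1 + s\<^sup>2) - t / (1 + t\<^sup>2) = (s - t) * ((1 - s * t) / ((1 + s\<^sup>2) * (1 + t\<^sup>2)))"
    using pos by (simp add: field_simps power2_eq_square)
  ultimately show ?thesis
    by (simp add: abs_mult)
qed

lemma abs_div_one_plus_square_le: "\<bar>t / (1 + t\<^sup>2)\<bar> \<le> (1::real)"
proof -
  have "\<bar>t\<bar> \<le> 1 + t\<^sup>2"
    using zero_le_power2[of "\<bar>t\<bar> - 1"] unfolding power2_diff by simp
  thus ?thesis by (simp add: abs_divide add_pos_nonneg)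
qed

lemma abs_div_one_plus_square_le_inverse: "t > 0 \<Longrightarrow> \<bar>t / (1 + t\<^sup>2)\<bar> \<le> 1 / (t::real)"
  by (simp add: abs_divide field_simps add_pos_nonneg power2_eq_square)

lemma N_kernel_of_real: "N_kernel (complex_of_real x) t
    = 1 / (complex_of_real t - \<i> * complex_of_real x) - complex_of_real (t / (1 + t\<^sup>2))"
  by (simp add: N_kernel_def)

lemma norm_N_kernel_diff_le:
  assumes "x \<noteq> 0"
  shows "cmod (N_kernel (complex_of_real x) s - N_kernel (complex_of_real x) t)
    \<le> (1 / x\<^sup>2 + 1) * \<bar>s - t\<bar>"
proof -
  define a where "a = complex_of_real s - \<i> * complex_of_real x"
  define b where "b = complex_of_real t - \<i> * complex_of_real x"
  have "\<bar>x\<bar> \<le> cmod a" "\<bar>x\<bar> \<le> cmod b"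
    unfolding a_def b_def by (rule abs_le_norm_N_denominator)+
  hence x2: "\<bar>x\<bar> * \<bar>x\<bar> \<le> cmod a * cmod b"
    by (intro mult_mono) simp_all
  have "a \<noteq> 0" "b \<noteq> 0"
    using \<open>\<bar>x\<bar> \<le> cmod a\<close> \<open>\<bar>x\<bar> \<le> cmod b\<close> assms by auto
  have "1 / a - 1 / b = complex_of_real (t - s) / (a * b)"
    using \<open>a \<noteq> 0\<close> \<open>b \<noteq> 0\<close> by (simp add: a_def b_def field_simps)
  hence "cmod (1 / a - 1 / b) = \<bar>s - t\<bar> / (cmod a * cmod b)"
    by (simp only: norm_divide norm_mult norm_of_real abs_minus_commute)
  also have "\<dots> \<le> \<bar>s - t\<bar> / (\<bar>x\<bar> * \<bar>x\<bar>)"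
    using assms x2 \<open>a \<noteq> 0\<close> \<open>b \<noteq> 0\<close> by (intro divide_left_mono mult_pos_pos) auto
  also have "\<dots> = 1 / x\<^sup>2 * \<bar>s - t\<bar>"
    by (simp add: power2_eq_square)
  finally have "cmod (1 / a - 1 / b) \<le> 1 / x\<^sup>2 * \<bar>s - t\<bar>" .
  have "N_kernel (complex_of_real x) s - N_kernel (complex_of_real x) t
      = (1 / a - 1 / b) - complex_of_real (s / (1 + s\<^sup>2) - t / (1 + t\<^sup>2))"
    by (simp add: N_kernel_of_real a_def b_def)
  hence "cmod (N_kernel (complex_of_real x) s - N_kernel (complex_of_real x) t)
      \<le> cmod (1 / a - 1 / b) + \<bar>s / (1 + s\<^sup>2) - t / (1 + t\<^sup>2)\<bar>"
    using norm_triangle_ineq4[of "1 / a - 1 / b" "complex_of_real (s / (1 + s\<^sup>2) - t / (1 + t\<^sup>2))"]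
    by (simp only: norm_of_real)
  moreover have "(1 / x\<^sup>2 + 1) * \<bar>s - t\<bar> = 1 / x\<^sup>2 * \<bar>s - t\<bar> + \<bar>s - t\<bar>"
    by (simp add: distrib_right)
  ultimately show ?thesis
    using \<open>cmod (1 / a - 1 / b) \<le> 1 / x\<^sup>2 * \<bar>s - t\<bar>\<close> abs_div_one_plus_square_diff_le[of s t]
    by linarith
qed

lemma norm_N_kernel_le:
  assumes "x \<noteq> 0"
  shows "cmod (N_kernel (complex_of_real x) t) \<le> 1 / \<bar>x\<bar> + 1"
proof -
  have "cmod (1 / (complex_of_real t - \<i> * complex_of_real x)) \<le> 1 / \<bar>x\<bar>"
    using abs_le_norm_N_denominator(1)[of x t] assms by (simp add: norm_divide frac_le)
  thus ?thesis
    unfolding N_kernel_of_real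
    using norm_triangle_ineq4[of "1 / (complex_of_real t - \<i> * complex_of_real x)"
        "complex_of_real (t / (1 + t\<^sup>2))"] abs_div_one_plus_square_le[of t]
    by (simp only: norm_of_real)
qed

lemma norm_N_kernel_le_inverse:
  assumes "t > 0"
  shows "cmod (N_kernel (complex_of_real x) t) \<le> 2 / t"
proof -
  have "cmod (1 / (complex_of_real t - \<i> * complex_of_real x)) \<le> 1 / t"
    using abs_le_norm_N_denominator(2)[of t x] assms by (simp add: norm_divide frac_le)
  thus ?thesis
    unfolding N_kernel_of_real
    using norm_triangle_ineq4[of "1 / (complex_of_real t - \<i> * complex_of_real x)"
        "complex_of_real (t / (1 + t\<^sup>2))"] abs_div_one_plus_square_le_inverse[OF assms]
    by (simp only: norm_of_real)
qed

lemma N_kernel_uminus: "N_kernel (complex_of_real (- x)) t = cnj (N_kernel (complex_of_real x) t)"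
  by (simp add: N_kernel_def)

lemma sgn_mult_Im_N_kernel_nonneg: "0 \<le> sgn x * Im (N_kernel (complex_of_real x) t)"
proof -
  have "Im (N_kernel (complex_of_real x) t)
      = x / (cmod (complex_of_real t - \<i> * complex_of_real x))\<^sup>2"
    by (simp add: N_kernel_of_real Im_divide')
  moreover have "0 \<le> sgn x * x"
    by (simp add: sgn_if)
  ultimately show ?thesis
    by simp
qed

lemma admissible_kernel_N_kernel:
  assumes "pos_op_measure \<mu>" "x \<noteq> 0"
  shows "admissible_kernel \<mu> (\<lambda>t. N_kernel (complex_of_real x) t / complex_of_real pi)
    (1 / x\<^sup>2 + 1) (1 / \<bar>x\<bar> + 1) 2"
proof -
  have div_pi: "cmod (z / complex_of_real pi) \<le> cmod z" for z
    using pi_gt3 by (simp add: norm_divide divide_le_eq mult_le_cancel_left1)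
  show ?thesis
  proof
    show "(\<lambda>t. N_kernel (complex_of_real x) t / complex_of_real pi) \<in> borel_measurable borel"
      unfolding N_kernel_def by measurable
    show "cmod (N_kernel (complex_of_real x) s / complex_of_real pi
        - N_kernel (complex_of_real x) t / complex_of_real pi) \<le> (1 / x\<^sup>2 + 1) * \<bar>s - t\<bar>" for s t
      using order_trans[OF div_pi norm_N_kernel_diff_le[OF assms(2)]]
      by (simp add: diff_divide_distrib)
    show "cmod (N_kernel (complex_of_real x) t / complex_of_real pi) \<le> 1 / \<bar>x\<bar> + 1" for t
      using order_trans[OF div_pi norm_N_kernel_le[OF assms(2)]] .
    show "cmod (N_kernel (complex_of_real x) t / complex_of_real pi) \<le> 2 / t" if "t > 0" for t
      using order_trans[OF div_pi norm_N_kernel_le_inverse[OF that]] .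
  qed (rule assms(1))
qed

lemma N_mu_uminus:
  assumes "pos_op_measure \<mu>" "x \<noteq> 0"
  shows "N_mu \<mu> (complex_of_real (- x)) = adjoint_op (N_mu \<mu> (complex_of_real x))"
    and "adjoint_op (adjoint_op (N_mu \<mu> (complex_of_real x))) = N_mu \<mu> (complex_of_real x)"
    and "cinner (adjoint_op (N_mu \<mu> (complex_of_real x)) u) v
      = cinner u (N_mu \<mu> (complex_of_real x) v)"
proof -
  define k where "k = (\<lambda>t. N_kernel (complex_of_real x) t / complex_of_real pi)"
  interpret admissible_kernel \<mu> k "1 / x\<^sup>2 + 1" "1 / \<bar>x\<bar> + 1" 2
    unfolding k_def by (rule admissible_kernel_N_kernel[OF assms])
  interpret conj: admissible_kernel \<mu> "\<lambda>t. cnj (k t)" "1 / x\<^sup>2 + 1" "1 / \<bar>x\<bar> + 1" 2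
    by (rule admissible_kernel_cnj)
  note N = N_mu_eq_kernel_op[OF k_def]
  show "N_mu \<mu> (complex_of_real (- x)) = adjoint_op (N_mu \<mu> (complex_of_real x))"
    unfolding N adjoint_kernel_op
    by (rule conj.N_mu_eq_kernel_op)
      (simp only: k_def N_kernel_uminus complex_cnj_divide complex_cnj_complex_of_real)
  show "adjoint_op (adjoint_op (N_mu \<mu> (complex_of_real x))) = N_mu \<mu> (complex_of_real x)"
    unfolding N adjoint_kernel_op adjoint_kernel_op_cnj ..
  show "cinner (adjoint_op (N_mu \<mu> (complex_of_real x)) u) v
      = cinner u (N_mu \<mu> (complex_of_real x) v)"
    unfolding N adjoint_kernel_op by (rule cinner_kernel_op_cnj)
qed

lemma sgn_mult_Im_cinner_N_mu_nonneg:
  assumes "pos_op_measure \<mu>" "x \<noteq> 0"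
  shows "0 \<le> sgn x * Im (cinner v (N_mu \<mu> (complex_of_real x) v))"
proof -
  define k where "k = (\<lambda>t. N_kernel (complex_of_real x) t / complex_of_real pi)"
  interpret admissible_kernel \<mu> k "1 / x\<^sup>2 + 1" "1 / \<bar>x\<bar> + 1" 2
    unfolding k_def by (rule admissible_kernel_N_kernel[OF assms])
  show ?thesis
    unfolding N_mu_eq_kernel_op[OF k_def] using sgn_mult_Im_N_kernel_nonneg[of x]
    by (intro Im_cinner_self_kernel_op_nonneg) (simp add: k_def)
qed

theorem lemma2p11:
  fixes \<mu> :: "real set \<Rightarrow> 'a::chilbert_space \<Rightarrow> 'a" and x :: real
  assumes "carleson_measure \<mu>" and "x \<noteq> 0"
  shows "R_mu \<mu> (complex_of_real (- x)) = R_mu \<mu> (complex_of_real x)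
    \<and> I_mu \<mu> (complex_of_real (- x)) = (\<lambda>v. - I_mu \<mu> (complex_of_real x) v)
    \<and> op_nonneg (\<lambda>v. scaleC (complex_of_real (sgn x)) (I_mu \<mu> (complex_of_real x) v))"
proof -
  have pos: "pos_op_measure \<mu>"
    using assms(1) by (simp add: carleson_measure_def)
  note N = N_mu_uminus[OF pos assms(2)]
  have "op_nonneg (\<lambda>v. scaleC (complex_of_real (sgn x)) (I_mu \<mu> (complex_of_real x) v))"
    unfolding I_mu_def
    by (rule op_nonneg_imaginary_part[OF N(3) sgn_mult_Im_cinner_N_mu_nonneg[OF pos assms(2)]])
  thus ?thesis
    unfolding R_mu_def I_mu_def N(1,2) by (simp add: add.commute scaleC_diff_right)
qed

end
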